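(* Let $\mathcal{A},\mathcal{B},\mathcal{D},\mathcal{H},\tau,\mathcal{V}>0$ with $\mathcal{A}>2\mathcal{B}(\mathcal{H}+\sqrt{1+\mathcal{H}^2})$, and let $\mathbf{W}^\ast=(U^\ast,V^\ast,S^\ast,0)$ be any spatially homogeneous steady state of (S) with $V^\ast>0$ and $\mathcal{H}V^\ast<1$ (in particular the state $\mathbf{W}_R^\ast$ with $V^\ast=V_R=\frac{\mathcal{A}+\sqrt{\mathcal{A}^2-4\mathcal{B}(\mathcal{B}+\mathcal{A}\mathcal{H})}}{2(\mathcal{B}+\mathcal{A}\mathcal{H})}$ when $\mathcal{H}V_R<1$). Then for no real wavenumber $k\neq0$ does the dispersion relation $\det(\omega I+\mathrm{i}kM-\mathcal{L}^\ast)=0$ admit the root $\omega=0$. In other words, (S) admits no Turing (stationary) instability at such a steady state.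
   Context: The dimensionless model (S): $U_t-\mathcal{V}U_x=\mathcal{A}-U-UV^2$, $V_t+J_x=UV^2-\mathcal{B}V-\mathcal{H}SV$, $\mathcal{D}S_t=\mathcal{B}V+\mathcal{H}SV-S$, $\tau J_t+V_x=-J$. Written as $\mathbf{W}_t+M\mathbf{W}_x=\mathbf{N}(\mathbf{W})$ with $\mathbf{W}=(U,V,S,J)^T$, $\mathbf{N}=(\mathcal{A}-U-UV^2,\ UV^2-\mathcal{B}V-\mathcal{H}SV,\ (\mathcal{B}V+\mathcal{H}SV-S)/\mathcal{D},\ -J/\tau)^T$ and $M$ the $4\times4$ matrix with entries $M_{11}=-\mathcal{V}$, $M_{24}=1$, $M_{42}=1/\tau$ and all other entries zero. $\mathcal{L}^\ast$ is the Jacobian of $\mathbf{N}$ at $\mathbf{W}^\ast$, and $I$ the $4\times4$ identity. Homogeneous steady states with $V^\ast>0$ satisfy $U^\ast=\mathcal{B}/(V^\ast(1-\mathcal{H}V^\ast))$, $S^\ast=\mathcal{B}V^\ast/(1-\mathcal{H}V^\ast)$. *)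

theory Defs
  imports "HOL-Analysis.Analysis"
begin

text \<open>State vector W = (U, V, S, J), components indexed 1..4 (in type 4, index 4 is the element 0).\<close>

definition Nfield :: "real \<Rightarrow> real \<Rightarrow> real \<Rightarrow> real \<Rightarrow> real \<Rightarrow> real^4 \<Rightarrow> real^4" where
  "Nfield A B D H \<tau> w =
     vector [A - w$1 - w$1 * (w$2)^2,
             w$1 * (w$2)^2 - B * w$2 - H * w$3 * w$2,
             (B * w$2 + H * w$3 * w$2 - w$3) / D,
             - w$4 / \<tau>]"

definition Mmat :: "real \<Rightarrow> real \<Rightarrow> real^4^4" where
  "Mmat Vc \<tau> = (\<chi> i j. if i = 1 \<and> j = 1 then - Vc
                        else if i = 2 \<and> j = 4 then 1
                        else if i = 4 \<and> j = 2 then 1 / \<tau>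
                        else 0)"

definition cmat :: "real^'n^'m \<Rightarrow> complex^'n^'m" where
  "cmat X = (\<chi> i j. complex_of_real (X $ i $ j))"

end

theory Submission
  imports Defs
begin

text \<open>
  At \<omega> = 0, using the steady-state relation q := U V = B + H S, rows 1, 3 and 4 of the
  dispersion matrix express x1, x3, x4 of a kernel vector through x2, and row 2 becomes x2 P = 0
  with P = 2 q V^2 (1 - H V) + (1 + V^2 - i k Vc) R and R = k^2 (1 - H V) + q (2 H V - 1) real
  (P is D \<tau> times the determinant). Since Im P = -k Vc R, P = 0 would force R = 0, and then
  Re P = 2 q V^2 (1 - H V) > 0. Only U > 0 (from A > 0), V > 0 and H V < 1 enter; B > 0, H > 0
  and the lower bound on A, which make the steady state exist, are unused.
\<close>

lemma vector_4 [simp]: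
  "(vector [a, b, c, d] :: 'a::zero^4) $ 1 = a"
  "(vector [a, b, c, d] :: 'a::zero^4) $ 2 = b"
  "(vector [a, b, c, d] :: 'a::zero^4) $ 3 = c"
  "(vector [a, b, c, d] :: 'a::zero^4) $ 4 = d"
  by (simp_all add: vector_def)

lemma has_derivative_vec_componentwise:
  fixes f :: "'a::real_normed_vector \<Rightarrow> real^'n"
  assumes "\<forall>i. ((\<lambda>x. f x $ i) has_derivative (\<lambda>h. f' h $ i)) (at a within S)"
  shows "(f has_derivative f') (at a within S)"
proof (rule has_derivative_componentwise_within[THEN iffD2], intro ballI)
  fix b :: "real^'n"
  assume "b \<in> Basis"
  then obtain i where "b = axis i 1"
    by (auto simp: Basis_vec_def)
  with assms show "((\<lambda>x. f x \<bullet> b) has_derivative (\<lambda>h. f' h \<bullet> b)) (at a within S)"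
    by (simp add: inner_axis)
qed

lemma has_derivative_vec_nth [derivative_intros]:
  "((\<lambda>x::real^'n. x $ j) has_derivative (\<lambda>h. h $ j)) F"
  by (rule bounded_linear.has_derivative[OF bounded_linear_vec_nth has_derivative_ident])

definition Nfield_jacobian :: "real \<Rightarrow> real \<Rightarrow> real \<Rightarrow> real \<Rightarrow> real^4 \<Rightarrow> real^4^4" where
  "Nfield_jacobian B D H \<tau> w =
     vector [vector [- 1 - (w$2)^2, - 2 * w$1 * w$2, 0, 0],
             vector [(w$2)^2, 2 * w$1 * w$2 - B - H * w$3, - H * w$2, 0],
             vector [0, (B + H * w$3) / D, (H * w$2 - 1) / D, 0],
             vector [0, 0, 0, - 1 / \<tau>]]"

lemma has_derivative_Nfield:
  "(Nfield A B D H \<tau> has_derivative (*v) (Nfield_jacobian B D H \<tau> w)) (at w)"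
  by (rule has_derivative_vec_componentwise, unfold forall_4)
     (simp add: Nfield_def Nfield_jacobian_def matrix_vector_mult_def sum_4 divide_inverse,
      auto intro!: derivative_eq_intros simp: algebra_simps power2_eq_square)

lemma jacobian_Nfield:
  "jacobian (Nfield A B D H \<tau>) (at w) = Nfield_jacobian B D H \<tau> w"
  unfolding jacobian_def frechet_derivative_at[OF has_derivative_Nfield, symmetric]
  by simp

lemma Nfield_steady_state:
  assumes "Nfield A B D H \<tau> (vector [U, V, S, J]) = 0"
  shows "U * (1 + V^2) = A" and "V * (B + H * S) = U * V^2"
proof -
  have "Nfield A B D H \<tau> (vector [U, V, S, J]) $ i = 0" for i
    using assms by simp
  from this[of 1] this[of 2] show "U * (1 + V^2) = A" and "V * (B + H * S) = U * V^2"
    by (simp_all add: Nfield_def algebra_simps)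
qed

definition stationary_dispersion_matrix ::
    "real \<Rightarrow> real \<Rightarrow> real \<Rightarrow> real \<Rightarrow> real \<Rightarrow> real \<Rightarrow> real \<Rightarrow> complex^4^4" where
  "stationary_dispersion_matrix q V H k Vc D \<tau> =
     vector [vector [1 + V^2 - \<i> * k * Vc, 2 * q, 0, 0],
             vector [- (V^2), - q, H * V, \<i> * k],
             vector [0, - q / D, (1 - H * V) / D, 0],
             vector [0, \<i> * k / \<tau>, 0, 1 / \<tau>]]"

lemma mat_matrix_mult_nth:
  fixes c :: "'a::semiring_1"
  shows "(mat c ** X) $ i $ j = c * X $ i $ j"
  by (simp add: matrix_matrix_mult_def mat_def if_distrib[where f = "\<lambda>a. a * _"] cong: if_cong)

lemma dispersion_matrix_at_zero:
  assumes "B + H * S = U * V"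
  shows "mat 0 + mat (\<i> * complex_of_real k) ** cmat (Mmat Vc \<tau>)
           - cmat (Nfield_jacobian B D H \<tau> (vector [U, V, S, J]))
         = stationary_dispersion_matrix (U * V) V H k Vc D \<tau>"
  using assms
  by (simp add: vec_eq_iff forall_4 mat_matrix_mult_nth cmat_def Mmat_def Nfield_jacobian_def
      stationary_dispersion_matrix_def)
     (simp add: algebra_simps diff_divide_distrib flip: of_real_mult of_real_add)

lemma reduced_dispersion_nonzero:
  fixes q V H k Vc :: real
  assumes "q > 0" and "V \<noteq> 0" and "H * V < 1" and "k \<noteq> 0" and "Vc \<noteq> 0"
  defines "R \<equiv> k^2 * (1 - H * V) + q * (2 * H * V - 1)"
  shows "2 * q * V^2 * (1 - H * V) + (1 + V^2 - \<i> * k * Vc) * R \<noteq> 0"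
    (is "?P \<noteq> 0")
proof
  assume P: "?P = 0"
  have "Im ?P = - k * Vc * R"
    by simp
  with P assms(4,5) have "R = 0"
    by simp
  have "Re ?P = 2 * q * V^2 * (1 - H * V) + (1 + V^2) * R"
    by simp
  moreover have "Re ?P = 0"
    by (simp only: P zero_complex.sel)
  moreover have "(1 + V^2) * R = 0"
    using \<open>R = 0\<close> by simp
  moreover have "2 * q * V^2 * (1 - H * V) > 0"
    using assms(1-3) by simp
  ultimately show False
    by linarith
qed

lemma stationary_dispersion_matrix_kernel:
  fixes x :: "complex^4"
  assumes "q > 0" and "V \<noteq> 0" and "H * V < 1" and "k \<noteq> 0" and "Vc \<noteq> 0"
    and "D \<noteq> 0" and "\<tau> \<noteq> 0"
    and "stationary_dispersion_matrix q V H k Vc D \<tau> *v x = 0"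
  shows "x = 0"
proof -
  define K where "K = stationary_dispersion_matrix q V H k Vc D \<tau>"
  define c where "c = 1 + V^2 - \<i> * k * Vc"
  have "(K *v x) $ 1 = c * x$1 + 2 * q * x$2"
    and "(K *v x) $ 2 = - (V^2) * x$1 - q * x$2 + H * V * x$3 + \<i> * k * x$4"
    and "D * (K *v x) $ 3 = (1 - H * V) * x$3 - q * x$2"
    and "\<tau> * (K *v x) $ 4 = \<i> * k * x$2 + x$4"
    using assms(6,7)
    by (simp_all add: K_def stationary_dispersion_matrix_def matrix_vector_mult_def sum_4 c_def
        field_simps)
  moreover have "K *v x = 0"
    using assms(8) by (simp add: K_def)
  ultimately have x1: "c * x$1 = - (2 * q * x$2)"
    and row2: "- (V^2) * x$1 - q * x$2 + H * V * x$3 + \<i> * k * x$4 = 0"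
    and x3: "(1 - H * V) * x$3 = q * x$2"
    and x4: "x$4 = - (\<i> * k * x$2)"
    by (simp_all add: eq_neg_iff_add_eq_0 add.commute)
  define R where "R = k^2 * (1 - H * V) + q * (2 * H * V - 1)"
  have "0 = (1 - H * V) * c * (- (V^2) * x$1 - q * x$2 + H * V * x$3 + \<i> * k * x$4)"
    using row2 by simp
  also have "\<dots> = - (V^2) * (1 - H * V) * (c * x$1) - q * (1 - H * V) * c * x$2
      + H * V * c * ((1 - H * V) * x$3) + \<i> * k * (1 - H * V) * c * x$4"
    by (simp add: algebra_simps)
  also have "\<dots> = x$2 * (2 * q * V^2 * (1 - H * V) + c * R)"
    unfolding x1 x3 x4 by (simp add: R_def algebra_simps power2_eq_square)
  finally have "x$2 = 0"
    using reduced_dispersion_nonzero[OF assms(1-5)] by (simp add: c_def R_def)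
  moreover have "Re c > 0"
    by (simp add: c_def add_pos_nonneg)
  moreover have "complex_of_real (1 - H * V) \<noteq> 0"
    by (subst of_real_eq_0_iff) (use assms(3) in linarith)
  ultimately show "x = 0"
    using x1 x3 x4 by (auto simp: vec_eq_iff forall_4)
qed

lemma det_stationary_dispersion_matrix_nonzero:
  assumes "q > 0" and "V \<noteq> 0" and "H * V < 1" and "k \<noteq> 0" and "Vc \<noteq> 0"
    and "D \<noteq> 0" and "\<tau> \<noteq> 0"
  shows "det (stationary_dispersion_matrix q V H k Vc D \<tau>) \<noteq> 0"
  using stationary_dispersion_matrix_kernel[OF assms] matrix_left_invertible_ker
    invertible_left_inverse invertible_det_nz
  by metis

theorem mainTheorem7:
  fixes A B D H \<tau> Vc U V S :: real
  assumes "A > 0" and "B > 0" and "D > 0" and "H > 0" and "\<tau> > 0" and "Vc > 0"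
    and "A > 2 * B * (H + sqrt (1 + H^2))"
    and "Nfield A B D H \<tau> (vector [U, V, S, 0]) = 0"
    and "V > 0" and "H * V < 1"
  shows "\<forall>k::real. k \<noteq> 0 \<longrightarrow>
           det (mat (0::complex) + mat (\<i> * complex_of_real k) ** cmat (Mmat Vc \<tau>)
                - cmat (jacobian (Nfield A B D H \<tau>) (at (vector [U, V, S, 0])))) \<noteq> 0"
proof (intro allI impI)
  fix k :: real
  assume "k \<noteq> 0"
  have "U * (1 + V^2) = A" and "V * (B + H * S) = U * V^2"
    using Nfield_steady_state[OF assms(8)] by auto
  moreover have "1 + V^2 > 0"
    using zero_le_power2[of V] by linarith
  ultimately have "U > 0" and q: "B + H * S = U * V"
    using assms(1,9) zero_less_mult_pos2[of U "1 + V^2"] by (auto simp: power2_eq_square)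
  then have "U * V > 0"
    using assms(9) by simp
  then show "det (mat 0 + mat (\<i> * complex_of_real k) ** cmat (Mmat Vc \<tau>)
                - cmat (jacobian (Nfield A B D H \<tau>) (at (vector [U, V, S, 0])))) \<noteq> 0"
    unfolding jacobian_Nfield dispersion_matrix_at_zero[OF q]
    using assms(3,5,6,9,10) \<open>k \<noteq> 0\<close>
    by (intro det_stationary_dispersion_matrix_nonzero) auto
qed

end
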